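(* Let $P\in\Delta_{\mathcal{T},\mathcal{X},\mathcal{Y}}$ and suppose $|\mathcal{T}|<\min\{|\mathcal{X}|,|\mathcal{Y}|\}$. If there exists a maximizer of $H_Q(T\mid X,Y)$ over $Q\in\Delta_P$ with full support $\mathcal{T}\times\mathcal{X}\times\mathcal{Y}$, then the maximizer is not unique.
   Context: $T,X,Y$ are random variables with finite state spaces $\mathcal{T},\mathcal{X},\mathcal{Y}$; $\Delta_{\mathcal{T},\mathcal{X},\mathcal{Y}}$ is the set of all joint distributions on $\mathcal{T}\times\mathcal{X}\times\mathcal{Y}$. For $P\in\Delta_{\mathcal{T},\mathcal{X},\mathcal{Y}}$, $\Delta_P=\{Q\in\Delta_{\mathcal{T},\mathcal{X},\mathcal{Y}}: Q(X=x,T=t)=P(X=x,T=t),\ Q(Y=y,T=t)=P(Y=y,T=t)\ \forall x,y,t\}$. $H_Q(T\mid X,Y)$ is the conditional entropy under $Q$. *)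

theory Defs
  imports "HOL-Analysis.Analysis"
begin

definition is_dist :: "('t::finite \<times> 'x::finite \<times> 'y::finite \<Rightarrow> real) \<Rightarrow> bool" where
  "is_dist Q \<longleftrightarrow> (\<forall>z. 0 \<le> Q z) \<and> (\<Sum>z\<in>UNIV. Q z) = 1"

definition Delta_P :: "('t::finite \<times> 'x::finite \<times> 'y::finite \<Rightarrow> real) \<Rightarrow> ('t \<times> 'x \<times> 'y \<Rightarrow> real) set" where
  "Delta_P P = {Q. is_dist Q \<and>
      (\<forall>t x. (\<Sum>y\<in>UNIV. Q (t, x, y)) = (\<Sum>y\<in>UNIV. P (t, x, y))) \<and>
      (\<forall>t y. (\<Sum>x\<in>UNIV. Q (t, x, y)) = (\<Sum>x\<in>UNIV. P (t, x, y)))}"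

text \<open>Natural logarithm (the base does not affect maximizers).\<close>

definition cond_entropy :: "('t::finite \<times> 'x::finite \<times> 'y::finite \<Rightarrow> real) \<Rightarrow> real" where
  "cond_entropy Q = - (\<Sum>(t, x, y)\<in>UNIV.
      if Q (t, x, y) = 0 then 0
      else Q (t, x, y) * ln (Q (t, x, y) / (\<Sum>t'\<in>UNIV. Q (t', x, y))))"

end

theory Submission
  imports Defs
begin

text \<open>
  At a maximizer Q0 of full support, the first-order condition along every direction D that
  preserves the (T,X) and (T,Y) marginals says that D is orthogonal to ln Q0(t | x,y). Testing
  it with D = delta_t * (delta_x - delta_x0) * (delta_y - delta_y0) forces the factorization
  Q0(t,x,y) = Q0(x,y) * alpha(t,x) * beta(t,y). Since |T| < |X| and |T| < |Y|, there are nonzero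
  u, v with sum_x u(x) alpha(t,x) = 0 and sum_y v(y) beta(t,y) = 0 for every t. Multiplying Q0 by
  1 + e u(x) v(y) / Q0(x,y) preserves both marginals and every conditional Q0(t | x,y), so the
  conditional entropy is linear in e with slope given by the first-order sum, i.e. zero; for
  small e > 0 this is a second maximizer.
\<close>

lemma sum_UNIV_triple:
  fixes f :: "'t::finite \<times> 'x::finite \<times> 'y::finite \<Rightarrow> 'a::comm_monoid_add"
  shows "(\<Sum>z\<in>UNIV. f z) = (\<Sum>t\<in>UNIV. \<Sum>x\<in>UNIV. \<Sum>y\<in>UNIV. f (t, x, y))"
  by (simp add: sum.cartesian_product flip: UNIV_Times_UNIV)

definition xy_marginal :: "('t::finite \<times> 'x \<times> 'y \<Rightarrow> real) \<Rightarrow> 'x \<Rightarrow> 'y \<Rightarrow> real" where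
  "xy_marginal Q x y = (\<Sum>t\<in>UNIV. Q (t, x, y))"

lemma xy_marginal_pos: "\<forall>z. Q z > 0 \<Longrightarrow> xy_marginal Q x y > 0"
  unfolding xy_marginal_def by (intro sum_pos) auto

lemma cond_entropy_eq_of_pos:
  assumes "\<forall>z. Q z > 0"
  shows "cond_entropy Q = - (\<Sum>(t, x, y)\<in>UNIV. Q (t, x, y) * ln (Q (t, x, y) / xy_marginal Q x y))"
  using assms unfolding cond_entropy_def xy_marginal_def
  by (intro arg_cong[where f = uminus] sum.cong) (auto simp: less_imp_neq[symmetric])

lemma cond_entropy_scale_xy:
  assumes "\<forall>z. Q z > 0" and "\<forall>x y. w x y > 0"
  shows "cond_entropy (\<lambda>(t, x, y). w x y * Q (t, x, y))
    = - (\<Sum>(t, x, y)\<in>UNIV. w x y * Q (t, x, y) * ln (Q (t, x, y) / xy_marginal Q x y))"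
proof -
  have "xy_marginal (\<lambda>(t, x, y). w x y * Q (t, x, y)) x y = w x y * xy_marginal Q x y" for x y
    by (simp add: xy_marginal_def sum_distrib_left)
  with assms show ?thesis
    by (subst cond_entropy_eq_of_pos) (auto simp: mult_pos_pos less_imp_neq[symmetric])
qed

lemma eventually_perturbation_pos:
  fixes f g :: "'a::finite \<Rightarrow> real"
  assumes "\<forall>z. f z > 0"
  shows "\<forall>\<^sub>F e in nhds 0. \<forall>z. f z + e * g z > 0"
proof (intro eventually_all_finite)
  fix z
  have "((\<lambda>e. f z + e * g z) \<longlongrightarrow> f z) (nhds 0)"
    by (auto intro!: tendsto_eq_intros filterlim_ident)
  then show "\<forall>\<^sub>F e in nhds 0. f z + e * g z > 0"
    using assms by (auto intro: order_tendstoD)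
qed

lemma perturbation_in_Delta_P:
  assumes "Q \<in> Delta_P P"
    and "\<forall>t x. (\<Sum>y\<in>UNIV. D (t, x, y)) = 0"
    and "\<forall>t y. (\<Sum>x\<in>UNIV. D (t, x, y)) = 0"
    and "\<forall>z. Q z + D z \<ge> 0"
  shows "(\<lambda>z. Q z + D z) \<in> Delta_P P"
proof -
  have "(\<Sum>z\<in>UNIV. D z) = 0"
    using assms(2) by (simp add: sum_UNIV_triple)
  with assms show ?thesis
    by (auto simp: Delta_P_def is_dist_def sum.distrib)
qed

lemma cond_entropy_directional_derivative:
  fixes Q D :: "'t::finite \<times> 'x::finite \<times> 'y::finite \<Rightarrow> real"
  assumes pos: "\<forall>z. Q z > 0"
  shows "((\<lambda>e. cond_entropy (\<lambda>z. Q z + e * D z)) has_real_derivative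
      - (\<Sum>(t, x, y)\<in>UNIV. D (t, x, y) * ln (Q (t, x, y) / xy_marginal Q x y))) (at 0)"
proof -
  define S where "S = xy_marginal Q"
  define Dt where "Dt = xy_marginal D"
  define G where "G e = - (\<Sum>t\<in>UNIV. \<Sum>x\<in>UNIV. \<Sum>y\<in>UNIV.
      (Q (t, x, y) + e * D (t, x, y)) * (ln (Q (t, x, y) + e * D (t, x, y)) - ln (S x y + e * Dt x y)))"
    for e
  have S_pos: "S x y > 0" for x y
    using pos by (simp add: S_def xy_marginal_pos)
  have Q_nz: "Q z \<noteq> 0" for z
    using pos by (metis less_irrefl)
  have "\<forall>\<^sub>F e in nhds 0. cond_entropy (\<lambda>z. Q z + e * D z) = G e"
    using eventually_perturbation_pos[OF pos, of D]
  proof eventually_elim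
    case (elim e)
    have "xy_marginal (\<lambda>z. Q z + e * D z) x y = S x y + e * Dt x y" for x y
      by (simp add: xy_marginal_def S_def Dt_def sum.distrib sum_distrib_left)
    moreover have "xy_marginal (\<lambda>z. Q z + e * D z) x y > 0" for x y
      using elim by (intro xy_marginal_pos) auto
    ultimately show ?case
      using elim by (simp add: cond_entropy_eq_of_pos G_def sum_UNIV_triple ln_div less_imp_neq[symmetric])
  qed
  moreover have "(G has_real_derivative - (\<Sum>t\<in>UNIV. \<Sum>x\<in>UNIV. \<Sum>y\<in>UNIV.
      D (t, x, y) * (ln (Q (t, x, y)) - ln (S x y)) + (D (t, x, y) - Q (t, x, y) * Dt x y / S x y))) (at 0)"
    unfolding G_def using pos S_pos Q_nz
    by (auto intro!: derivative_eq_intros sum.cong simp: field_simps)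
  \<comment> \<open>The term coming from the marginal vanishes because \<open>\<Sum>t. Q (t, x, y) = S x y\<close>.\<close>
  moreover have "(\<Sum>t\<in>UNIV. \<Sum>x\<in>UNIV. \<Sum>y\<in>UNIV. D (t, x, y) - Q (t, x, y) * Dt x y / S x y) = 0"
  proof -
    have marginal: "(\<Sum>t\<in>UNIV. Q (t, x, y) * Dt x y / S x y) = Dt x y" for x y
      using S_pos[of x y] by (simp add: S_def xy_marginal_def flip: sum_divide_distrib sum_distrib_right)
    have "(\<Sum>t\<in>UNIV. \<Sum>x\<in>UNIV. \<Sum>y\<in>UNIV. D (t, x, y) - Q (t, x, y) * Dt x y / S x y)
        = (\<Sum>x\<in>UNIV. \<Sum>y\<in>UNIV. \<Sum>t\<in>UNIV. D (t, x, y) - Q (t, x, y) * Dt x y / S x y)"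
      by (subst sum.swap) (intro sum.cong refl sum.swap)
    also have "\<dots> = 0"
      using marginal by (simp add: sum_subtractf Dt_def xy_marginal_def)
    finally show ?thesis .
  qed
  moreover have "(\<Sum>(t, x, y)\<in>UNIV. D (t, x, y) * ln (Q (t, x, y) / xy_marginal Q x y))
      = (\<Sum>t\<in>UNIV. \<Sum>x\<in>UNIV. \<Sum>y\<in>UNIV. D (t, x, y) * (ln (Q (t, x, y)) - ln (S x y)))"
    using Q_nz less_imp_neq[OF S_pos, symmetric] by (simp add: sum_UNIV_triple ln_div S_def)
  ultimately show ?thesis
    by (simp add: DERIV_cong_ev sum.distrib)
qed

lemma cond_entropy_max_first_order:
  fixes P Q0 D :: "'t::finite \<times> 'x::finite \<times> 'y::finite \<Rightarrow> real"
  assumes Q0: "Q0 \<in> Delta_P P"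
    and max: "\<forall>Q\<in>Delta_P P. cond_entropy Q \<le> cond_entropy Q0"
    and pos: "\<forall>z. Q0 z > 0"
    and D_tx: "\<forall>t x. (\<Sum>y\<in>UNIV. D (t, x, y)) = 0"
    and D_ty: "\<forall>t y. (\<Sum>x\<in>UNIV. D (t, x, y)) = 0"
  shows "(\<Sum>(t, x, y)\<in>UNIV. D (t, x, y) * ln (Q0 (t, x, y) / xy_marginal Q0 x y)) = 0"
proof -
  define H where "H e = cond_entropy (\<lambda>z. Q0 z + e * D z)" for e
  have "\<forall>\<^sub>F e in nhds 0. H e \<le> H 0"
    using eventually_perturbation_pos[OF pos, of D]
  proof eventually_elim
    case (elim e)
    have "(\<lambda>z. Q0 z + e * D z) \<in> Delta_P P"
      using Q0 D_tx D_ty elim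
      by (intro perturbation_in_Delta_P) (auto simp: less_imp_le simp flip: sum_distrib_left)
    then show ?case
      using max by (simp add: H_def)
  qed
  then have "\<forall>\<^sub>F e in at 0. H e \<le> H 0"
    by (simp add: eventually_at_filter eventually_mono)
  from fun_cong[OF has_derivative_local_max[OF cond_entropy_directional_derivative[OF pos,
        of D, folded H_def, unfolded has_field_derivative_def] this], of 1]
  show ?thesis
    by simp
qed

lemma sum_delta_diff:
  fixes f :: "'a::finite \<Rightarrow> real"
  shows "(\<Sum>z\<in>UNIV. (of_bool (z = a) - of_bool (z = b)) * f z) = f a - f b"
  by (simp add: left_diff_distrib sum_subtractf)

lemma tx_ty_additive_if_orthogonal:
  fixes L :: "'t::finite \<times> 'x::finite \<times> 'y::finite \<Rightarrow> real"
  assumes orth: "\<And>D. \<forall>t x. (\<Sum>y\<in>UNIV. D (t, x, y)) = 0 \<Longrightarrow> \<forall>t y. (\<Sum>x\<in>UNIV. D (t, x, y)) = 0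
      \<Longrightarrow> (\<Sum>(t, x, y)\<in>UNIV. D (t, x, y) * L (t, x, y)) = 0"
  shows "\<exists>a b. \<forall>t x y. L (t, x, y) = a t x + b t y"
proof -
  fix x0 :: 'x and y0 :: 'y
  have "L (t, x, y) = (L (t, x, y0) - L (t, x0, y0)) + L (t, x0, y)" for t x y
  proof -
    define D where "D = (\<lambda>(t', x', y'). of_bool (t' = t)
      * (of_bool (x' = x) - of_bool (x' = x0)) * (of_bool (y' = y) - of_bool (y' = y0)) :: real)"
    have "(\<Sum>(t, x, y)\<in>UNIV. D (t, x, y) * L (t, x, y)) = 0"
    proof (rule orth)
      show "\<forall>t x. (\<Sum>y\<in>UNIV. D (t, x, y)) = 0" "\<forall>t y. (\<Sum>x\<in>UNIV. D (t, x, y)) = 0"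
        by (simp_all add: D_def sum_subtractf flip: sum_distrib_left sum_distrib_right)
    qed
    moreover have "(\<Sum>(t, x, y)\<in>UNIV. D (t, x, y) * L (t, x, y))
        = L (t, x, y) - L (t, x, y0) - L (t, x0, y) + L (t, x0, y0)"
      by (simp add: D_def sum_UNIV_triple mult.assoc sum_delta_diff flip: sum_distrib_left)
    ultimately show ?thesis
      by simp
  qed
  then show ?thesis
    by (intro exI[of _ "\<lambda>t x. L (t, x, y0) - L (t, x0, y0)"] exI[of _ "\<lambda>t y. L (t, x0, y)"]) blast
qed

lemma cond_entropy_max_factorization:
  fixes P Q0 :: "'t::finite \<times> 'x::finite \<times> 'y::finite \<Rightarrow> real"
  assumes "Q0 \<in> Delta_P P"
    and "\<forall>Q\<in>Delta_P P. cond_entropy Q \<le> cond_entropy Q0"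
    and pos: "\<forall>z. Q0 z > 0"
  shows "\<exists>a b. \<forall>t x y. Q0 (t, x, y) = xy_marginal Q0 x y * (exp (a t x) * exp (b t y))"
proof -
  obtain a b where ab: "\<forall>t x y. ln (Q0 (t, x, y) / xy_marginal Q0 x y) = a t x + b t y"
    using tx_ty_additive_if_orthogonal[of "\<lambda>(t, x, y). ln (Q0 (t, x, y) / xy_marginal Q0 x y)"]
      cond_entropy_max_first_order[OF assms] by auto
  have "Q0 (t, x, y) = xy_marginal Q0 x y * exp (ln (Q0 (t, x, y) / xy_marginal Q0 x y))" for t x y
    using pos xy_marginal_pos[OF pos, of x y] by simp
  then show ?thesis
    by (auto simp: ab exp_add)
qed

lemma exists_other_maximizer_of_null_direction:
  fixes P Q0 :: "'t::finite \<times> 'x::finite \<times> 'y::finite \<Rightarrow> real" and c :: "'x \<Rightarrow> 'y \<Rightarrow> real"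
  assumes Q0: "Q0 \<in> Delta_P P"
    and max: "\<forall>Q\<in>Delta_P P. cond_entropy Q \<le> cond_entropy Q0"
    and pos: "\<forall>z. Q0 z > 0"
    and c_tx: "\<forall>t x. (\<Sum>y\<in>UNIV. Q0 (t, x, y) * c x y) = 0"
    and c_ty: "\<forall>t y. (\<Sum>x\<in>UNIV. Q0 (t, x, y) * c x y) = 0"
    and c_nz: "c x1 y1 \<noteq> 0"
  shows "\<exists>Q1\<in>Delta_P P. Q1 \<noteq> Q0 \<and> (\<forall>Q\<in>Delta_P P. cond_entropy Q \<le> cond_entropy Q1)"
proof -
  have "\<forall>\<^sub>F e in at_right 0. \<forall>x y. 1 + e * c x y > 0"
    using eventually_perturbation_pos[of "\<lambda>_::'x \<times> 'y. 1" "\<lambda>(x, y). c x y"]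
    unfolding eventually_at_filter by (auto elim: eventually_mono)
  then have "\<forall>\<^sub>F e in at_right 0. e > 0 \<and> (\<forall>x y. 1 + e * c x y > 0)"
    by (intro eventually_conj eventually_at_right_less)
  then obtain e :: real where e_pos: "e > 0" and w_pos: "\<forall>x y. 1 + e * c x y > 0"
    using eventually_happens'[OF trivial_limit_at_right_real] by blast
  define Q1 where "Q1 = (\<lambda>(t, x, y). (1 + e * c x y) * Q0 (t, x, y))"
  have "Q1 \<in> Delta_P P"
  proof -
    define D where "D = (\<lambda>(t, x, y). e * (Q0 (t, x, y) * c x y))"
    have Q1_eq: "Q1 = (\<lambda>z. Q0 z + D z)"
      by (auto simp: Q1_def D_def algebra_simps)
    have "Q1 z \<ge> 0" for z
      using pos w_pos by (auto simp: Q1_def less_imp_le split: prod.split)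
    then show ?thesis
      unfolding Q1_eq using Q0 c_tx c_ty
      by (intro perturbation_in_Delta_P) (auto simp: D_def simp flip: sum_distrib_left)
  qed
  moreover have "cond_entropy Q1 = cond_entropy Q0"
  proof -
    have "(\<Sum>(t, x, y)\<in>UNIV. Q0 (t, x, y) * c x y * ln (Q0 (t, x, y) / xy_marginal Q0 x y)) = 0"
      using cond_entropy_max_first_order[OF Q0 max pos, of "\<lambda>(t, x, y). Q0 (t, x, y) * c x y"] c_tx c_ty
      by simp
    then have "(\<Sum>(t, x, y)\<in>UNIV. (1 + e * c x y) * Q0 (t, x, y) * ln (Q0 (t, x, y) / xy_marginal Q0 x y))
        = (\<Sum>(t, x, y)\<in>UNIV. Q0 (t, x, y) * ln (Q0 (t, x, y) / xy_marginal Q0 x y))"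
      by (simp add: sum_UNIV_triple algebra_simps sum.distrib flip: sum_distrib_left)
    then show ?thesis
      using cond_entropy_scale_xy[OF pos, of "\<lambda>x y. 1 + e * c x y"] w_pos
      by (simp add: Q1_def cond_entropy_eq_of_pos[OF pos])
  qed
  moreover have "Q1 \<noteq> Q0"
  proof
    fix t1 :: 't
    assume "Q1 = Q0"
    then have "(1 + e * c x1 y1) * Q0 (t1, x1, y1) = Q0 (t1, x1, y1)"
      by (simp add: Q1_def fun_eq_iff)
    with e_pos c_nz pos[rule_format, of "(t1, x1, y1)"] show False
      by (simp add: algebra_simps)
  qed
  ultimately show ?thesis
    using max by auto
qed

lemma underdetermined_homogeneous_system_nontrivial_solution:
  fixes F :: "'t::finite \<Rightarrow> 'x::finite \<Rightarrow> real"
  assumes "CARD('t) < CARD('x)"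
  shows "\<exists>u. u \<noteq> (\<lambda>_. 0) \<and> (\<forall>t. (\<Sum>x\<in>UNIV. u x * F t x) = 0)"
proof -
  define f :: "real^'x \<Rightarrow> real^'t" where "f w = (\<chi> t. \<Sum>x\<in>UNIV. w $ x * F t x)" for w
  have lin: "linear f"
    unfolding f_def by (intro linearI) (auto simp: vec_eq_iff sum.distrib algebra_simps sum_distrib_left)
  have "\<not> inj f"
  proof
    assume "inj f"
    then have "dim (range f) = dim (UNIV :: (real^'x) set)"
      using lin by (intro dim_image_eq) (auto intro: inj_on_subset)
    moreover have "dim (range f) \<le> CARD('t)"
      using dim_subset_UNIV[of "range f"] by simp
    ultimately show False
      using assms by (simp add: dim_UNIV)
  qed
  then obtain w where "f w = 0" "w \<noteq> 0"
    using lin linear_injective_0 by blast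
  then show ?thesis
    by (intro exI[of _ "\<lambda>x. w $ x"]) (auto simp: f_def vec_eq_iff fun_eq_iff)
qed

theorem mainTheorem8:
  fixes P :: "'t::finite \<times> 'x::finite \<times> 'y::finite \<Rightarrow> real"
  assumes "is_dist P"
    and "CARD('t) < min CARD('x) CARD('y)"
    and "Q0 \<in> Delta_P P"
    and "\<forall>Q\<in>Delta_P P. cond_entropy Q \<le> cond_entropy Q0"
    and "\<forall>z. Q0 z > 0"
  shows "\<exists>Q1\<in>Delta_P P. Q1 \<noteq> Q0 \<and> (\<forall>Q\<in>Delta_P P. cond_entropy Q \<le> cond_entropy Q1)"
proof -
  obtain a b where Q0_eq: "\<forall>t x y. Q0 (t, x, y) = xy_marginal Q0 x y * (exp (a t x) * exp (b t y))"
    using cond_entropy_max_factorization[OF assms(3-5)] by blast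
  have S_pos: "xy_marginal Q0 x y > 0" for x y
    using assms(5) by (rule xy_marginal_pos)
  obtain u where u: "u \<noteq> (\<lambda>_. 0)" "\<forall>t. (\<Sum>x\<in>UNIV. u x * exp (a t x)) = 0"
    using underdetermined_homogeneous_system_nontrivial_solution[of "\<lambda>t x. exp (a t x)"] assms(2) by auto
  obtain v where v: "v \<noteq> (\<lambda>_. 0)" "\<forall>t. (\<Sum>y\<in>UNIV. v y * exp (b t y)) = 0"
    using underdetermined_homogeneous_system_nontrivial_solution[of "\<lambda>t y. exp (b t y)"] assms(2) by auto
  obtain x1 y1 where "u x1 \<noteq> 0" "v y1 \<noteq> 0"
    using u(1) v(1) by (auto simp: fun_eq_iff)
  moreover have "Q0 (t, x, y) * (u x * v y / xy_marginal Q0 x y) = (u x * exp (a t x)) * (v y * exp (b t y))"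
    for t x y
    using Q0_eq S_pos[of x y] by (simp add: field_simps)
  ultimately show ?thesis
    using u(2) v(2) S_pos[of x1 y1]
    by (intro exists_other_maximizer_of_null_direction[OF assms(3-5),
          of "\<lambda>x y. u x * v y / xy_marginal Q0 x y" x1 y1])
      (simp_all flip: sum_distrib_left sum_distrib_right)
qed

end
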